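(* Let $r$ be a constant integer, $f\in\mathscr{F}_r$ given through an $r$-decomposition $(V_i,f_i)_{i=1}^m$, and $k$ an integer with $r<k\le n-1$, and suppose $V$ is connected. Then the star exploration algorithm outputs a connected set $S\subseteq V$ with $|S|\le k$ that is an $O(k^{r-1})$-approximate solution of the $\underline{k}$SPM problem, i.e. $\max\{f(T):T\subseteq V,|T|\le k\}\le O(k^{r-1})\cdot f(S)$. Star exploration: for each $v\in V$, let $T^v$ be the output of the batch-greedy augmenting algorithm applied to $f^{\{v\}}$ on ground set $V\setminus\{v\}$ with parameters $r-1$ and $k-1$; let $L^v=\{u\in T^v: f^{\{v\}}(u\mid T^v\setminus\{u\})>0\}$, $S^v=L^v\cup\{v\}$; output a set $S^v$ maximizing $f(S^v)$.
   Context: $V$ is a finite set, $n=|V|$; $g(u\mid T)=g(T\cup\{u\})-g(T)$. Supermodular: $g(A)+g(B)\le g(A\cup B)+g(A\cap B)$; monotone: $g(B)\le g(A)$ for $B\subseteq A$. $\mathscr{F}_r$ is the family of nonnegative monotone supermodular $f:2^V\to\mathbb{R}_+$ admitting an $r$-decomposition: $V_1,\dots,V_m\subseteq V$ with $|V_i|\le r$ and nonnegative supermodular $f_i:2^{V_i}\to\mathbb{R}_+$ with $f(S)=\sum_i f_i(S\cap V_i)$. For nonempty $S\subseteq V$, $I_S=\{i:V_i\cap S\ne\emptyset\}$ and $f^S:2^{V\setminus S}\to\mathbb{R}$, $f^S(T)=\sum_{i\in I_S}\big(f_i((S\cup T)\cap V_i)-f_i(S\cap V_i)\big)$. The batch-greedy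 augmenting algorithm with function $g$ on ground set $U$ and integers $r',k'$: $T_0=\emptyset$, $t=\lfloor k'/r'\rfloor$; for $i=1,\dots,t$ choose an $r'$-subset $S_i$ of $U\setminus T_{i-1}$ maximizing $g(T_{i-1}\cup S_i)$, $T_i=T_{i-1}\cup S_i$; output any $k'$-subset of $U$ containing $T_t$. The underlying graph is $G=(V,E)$, $E=\bigcup_i\{uv:\{u,v\}\subseteq V_i,u\ne v\}$; a set $S$ is connected if $G[S]$ is connected; "$V$ is connected" means $G$ is connected. The $\underline{k}$SPM problem asks for $S\subseteq V$ with $|S|\le k$ maximizing $f(S)$ (no connectivity requirement). Constants in $O(\cdot)$ may depend on $r$. *)

theory Defs
  imports Complex_Main
begin

(* Elements of the ground set are natural numbers (any finite set can be encoded so). *)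

definition supermodular_on :: "'a set \<Rightarrow> ('a set \<Rightarrow> real) \<Rightarrow> bool" where
  "supermodular_on W g \<longleftrightarrow>
     (\<forall>A B. A \<subseteq> W \<longrightarrow> B \<subseteq> W \<longrightarrow> g A + g B \<le> g (A \<union> B) + g (A \<inter> B))"

definition monotone_on_sets :: "'a set \<Rightarrow> ('a set \<Rightarrow> real) \<Rightarrow> bool" where
  "monotone_on_sets W g \<longleftrightarrow> (\<forall>A B. A \<subseteq> W \<longrightarrow> B \<subseteq> A \<longrightarrow> g B \<le> g A)"

definition nonneg_on :: "'a set \<Rightarrow> ('a set \<Rightarrow> real) \<Rightarrow> bool" where
  "nonneg_on W g \<longleftrightarrow> (\<forall>A. A \<subseteq> W \<longrightarrow> 0 \<le> g A)"

definition r_decomposition ::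
  "nat \<Rightarrow> 'a set \<Rightarrow> ('a set \<Rightarrow> real) \<Rightarrow> nat \<Rightarrow> (nat \<Rightarrow> 'a set) \<Rightarrow> (nat \<Rightarrow> 'a set \<Rightarrow> real) \<Rightarrow> bool" where
  "r_decomposition r V f m Vs fs \<longleftrightarrow>
     (\<forall>i<m. Vs i \<subseteq> V \<and> card (Vs i) \<le> r \<and> nonneg_on (Vs i) (fs i) \<and> supermodular_on (Vs i) (fs i))
     \<and> (\<forall>S. S \<subseteq> V \<longrightarrow> f S = (\<Sum>i<m. fs i (S \<inter> Vs i)))"

definition in_Fr_with ::
  "nat \<Rightarrow> 'a set \<Rightarrow> ('a set \<Rightarrow> real) \<Rightarrow> nat \<Rightarrow> (nat \<Rightarrow> 'a set) \<Rightarrow> (nat \<Rightarrow> 'a set \<Rightarrow> real) \<Rightarrow> bool" where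
  "in_Fr_with r V f m Vs fs \<longleftrightarrow>
     finite V \<and> nonneg_on V f \<and> monotone_on_sets V f \<and> supermodular_on V f \<and> r_decomposition r V f m Vs fs"

text \<open>The function f^S (defined for T subset of V - S).\<close>
definition f_sup :: "nat \<Rightarrow> (nat \<Rightarrow> 'a set) \<Rightarrow> (nat \<Rightarrow> 'a set \<Rightarrow> real) \<Rightarrow> 'a set \<Rightarrow> 'a set \<Rightarrow> real" where
  "f_sup m Vs fs S T = (\<Sum>i\<in>{i. i < m \<and> Vs i \<inter> S \<noteq> {}}. fs i ((S \<union> T) \<inter> Vs i) - fs i (S \<inter> Vs i))"

definition batch_greedy_run :: "('a set \<Rightarrow> real) \<Rightarrow> 'a set \<Rightarrow> nat \<Rightarrow> nat \<Rightarrow> (nat \<Rightarrow> 'a set) \<Rightarrow> bool" where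
  "batch_greedy_run g U r' k' Ts \<longleftrightarrow>
     Ts 0 = {} \<and>
     (\<forall>i\<in>{1..k' div r'}. \<exists>Si. Si \<subseteq> U - Ts (i - 1) \<and> card Si = r' \<and>
        (\<forall>S'. S' \<subseteq> U - Ts (i - 1) \<longrightarrow> card S' = r' \<longrightarrow> g (Ts (i - 1) \<union> S') \<le> g (Ts (i - 1) \<union> Si)) \<and>
        Ts i = Ts (i - 1) \<union> Si)"

text \<open>All possible outputs of the batch-greedy augmenting algorithm (over all tie-breakings).\<close>
definition batch_greedy_outputs :: "('a set \<Rightarrow> real) \<Rightarrow> 'a set \<Rightarrow> nat \<Rightarrow> nat \<Rightarrow> 'a set set" where
  "batch_greedy_outputs g U r' k' =
     {X. \<exists>Ts. batch_greedy_run g U r' k' Ts \<and> X \<subseteq> U \<and> card X = k' \<and> Ts (k' div r') \<subseteq> X}"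

definition star_set :: "nat \<Rightarrow> (nat \<Rightarrow> 'a set) \<Rightarrow> (nat \<Rightarrow> 'a set \<Rightarrow> real) \<Rightarrow> 'a \<Rightarrow> 'a set \<Rightarrow> 'a set" where
  "star_set m Vs fs v Tv =
     {u \<in> Tv. f_sup m Vs fs {v} Tv - f_sup m Vs fs {v} (Tv - {u}) > 0} \<union> {v}"

definition star_exploration_outputs ::
  "nat \<Rightarrow> 'a set \<Rightarrow> ('a set \<Rightarrow> real) \<Rightarrow> nat \<Rightarrow> (nat \<Rightarrow> 'a set) \<Rightarrow> (nat \<Rightarrow> 'a set \<Rightarrow> real) \<Rightarrow> nat \<Rightarrow> 'a set set" where
  "star_exploration_outputs r V f m Vs fs k =
     {S. \<exists>T. (\<forall>v\<in>V. T v \<in> batch_greedy_outputs (f_sup m Vs fs {v}) (V - {v}) (r - 1) (k - 1)) \<and>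
          (\<exists>v\<in>V. S = star_set m Vs fs v (T v) \<and>
                 (\<forall>w\<in>V. f (star_set m Vs fs w (T w)) \<le> f S))}"

definition adj :: "nat \<Rightarrow> (nat \<Rightarrow> 'a set) \<Rightarrow> 'a \<Rightarrow> 'a \<Rightarrow> bool" where
  "adj m Vs u v \<longleftrightarrow> u \<noteq> v \<and> (\<exists>i<m. u \<in> Vs i \<and> v \<in> Vs i)"

text \<open>G[S] is connected (connected graphs are nonempty by convention).\<close>
definition connected_set :: "nat \<Rightarrow> (nat \<Rightarrow> 'a set) \<Rightarrow> 'a set \<Rightarrow> bool" where
  "connected_set m Vs S \<longleftrightarrow> S \<noteq> {} \<and>
     (\<forall>x\<in>S. \<forall>y\<in>S. (\<lambda>a b. a \<in> S \<and> b \<in> S \<and> adj m Vs a b)\<^sup>*\<^sup>* x y)"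

end

theory Submission
  imports Defs
begin

(* Fix a vertex v. Up to the linear term lin Z = sum over the blocks V_i containing v of
   |Z cap (V_i - v)| f_i({}), which is at most (r - 1) f({}), the function f^{v} is a sum psi of
   monotone functions (by supermodularity), each depending only on the at most r - 1 elements of
   one block V_i - v. Averaging over the (r-1)-subsets of a competitor Y shows that every batch of
   the greedy run raises f^{v} by at least a 1 / C(k-1, r-1) fraction of
   psi(Y) - psi(T^v) - C(k-2, r-2) lin. Removing elements of nonpositive marginal gain does not
   decrease a supermodular function, so f^{v}(T^v) <= f(S^v) <= f(S), and together this gives
   f^{v}(Y) <= 4 r C(k-2, r-2) f(S) whenever |Y| < k. Charging every block met by a set T to its
   elements, f(T) <= f({}) + sum over w in T of (f^{w}(T - w) + f({w})), hence f(T) = O(k^(r-1)) f(S).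
   Each S^v is a star centred at v: an element of positive marginal gain shares a block with v. *)

lemma ex_sum_le_card_mult:
  fixes h :: "'a \<Rightarrow> real"
  assumes "finite S" "S \<noteq> {}"
  shows "\<exists>x\<in>S. sum h S \<le> real (card S) * h x"
proof -
  have "Max (h ` S) \<in> h ` S" using assms by simp
  then obtain x where x: "x \<in> S" "h x = Max (h ` S)" by (metis imageE)
  then have "sum h S \<le> real (card S) * h x" using assms by (intro sum_bounded_above) auto
  then show ?thesis using x(1) by blast
qed

lemma card_subsets_containing_le:
  assumes "finite M" "u \<in> M"
  shows "card {P. P \<subseteq> M \<and> card P = p \<and> u \<in> P} \<le> (card M - 1) choose (p - 1)"
proof -
  let ?F = "{P. P \<subseteq> M \<and> card P = p \<and> u \<in> P}"
  have "inj_on (\<lambda>P. P - {u}) ?F"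
    by (rule inj_onI) (metis insert_Diff mem_Collect_eq)
  moreover have "(\<lambda>P. P - {u}) ` ?F \<subseteq> {Q. Q \<subseteq> M - {u} \<and> card Q = p - 1}"
    using assms by (auto dest: finite_subset)
  ultimately have "card ?F \<le> card {Q. Q \<subseteq> M - {u} \<and> card Q = p - 1}"
    using assms by (intro card_inj_on_le) auto
  also have "\<dots> = (card M - 1) choose (p - 1)"
    using assms by (simp add: n_subsets)
  finally show ?thesis .
qed

lemma sum_card_Int_subsets_le:
  assumes "finite M"
  shows "(\<Sum>P | P \<subseteq> M \<and> card P = p. card (P \<inter> W)) \<le> card (M \<inter> W) * ((card M - 1) choose (p - 1))"
proof -
  let ?F = "{P. P \<subseteq> M \<and> card P = p}"
  have "(\<Sum>P\<in>?F. card (P \<inter> W)) = (\<Sum>P\<in>?F. \<Sum>u\<in>M \<inter> W. if u \<in> P then 1 else 0)"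
  proof (intro sum.cong refl)
    fix P assume "P \<in> ?F"
    then have "P \<inter> W = M \<inter> W \<inter> P" by auto
    then show "card (P \<inter> W) = (\<Sum>u\<in>M \<inter> W. if u \<in> P then 1 else 0)"
      using assms by (simp add: sum.If_cases)
  qed
  also have "\<dots> = (\<Sum>u\<in>M \<inter> W. card {P. P \<subseteq> M \<and> card P = p \<and> u \<in> P})"
    using assms by (subst sum.swap) (simp add: sum.If_cases Collect_conj_eq Int_assoc)
  also have "\<dots> \<le> (\<Sum>u\<in>M \<inter> W. (card M - 1) choose (p - 1))"
    using assms by (intro sum_mono card_subsets_containing_le) auto
  finally show ?thesis by simp
qed

lemma choose_le_twice_div_mult_choose:
  assumes "0 < p" "p \<le> k"
  shows "k choose p \<le> 2 * (k div p) * ((k - 1) choose (p - 1))"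
proof -
  have "1 \<le> k div p" using assms div_le_mono[of p k p] by simp
  then have "k mod p \<le> (k div p) * p" using assms mod_less_divisor[of p k] by (metis less_imp_le mult_1 mult_le_mono1 order_trans)
  then have "k \<le> 2 * (k div p) * p" using div_mult_mod_eq[of k p] by linarith
  then have "p * (k choose p) \<le> p * (2 * (k div p) * ((k - 1) choose (p - 1)))"
    using times_binomial_minus1_eq[OF assms(1), of k] by (simp add: mult_le_mono1 algebra_simps)
  then show ?thesis using assms by simp
qed

lemma supermodular_onD:
  "supermodular_on W g \<Longrightarrow> A \<subseteq> W \<Longrightarrow> B \<subseteq> W \<Longrightarrow> g A + g B \<le> g (A \<union> B) + g (A \<inter> B)"
  unfolding supermodular_on_def by blast

lemma supermodular_on_le_positive_marginals:
  assumes sm: "supermodular_on W g" and "X \<subseteq> W" "finite X"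
  shows "g X \<le> g {u \<in> X. g X - g (X - {u}) > 0}"
proof -
  let ?D = "{u \<in> X. g X \<le> g (X - {u})}"
  have "g X \<le> g (X - E)" if "finite E" "E \<subseteq> ?D" for E
    using that
  proof (induction E rule: finite_induct)
    case (insert u E)
    have "(X - E) \<union> (X - {u}) = X" "(X - E) \<inter> (X - {u}) = X - insert u E"
      using insert.hyps by auto
    then have "g (X - E) + g (X - {u}) \<le> g X + g (X - insert u E)"
      using supermodular_onD[OF sm, of "X - E" "X - {u}"] \<open>X \<subseteq> W\<close> by (metis Diff_subset order_trans)
    moreover have "g X \<le> g (X - E)" "g X \<le> g (X - {u})"
      using insert.IH insert.prems by simp_all
    ultimately show ?case by linarith
  qed simp
  moreover have "finite ?D" using \<open>finite X\<close> by (rule rev_finite_subset) auto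
  ultimately have "g X \<le> g (X - ?D)" by blast
  also have "X - ?D = {u \<in> X. g X - g (X - {u}) > 0}" by auto
  finally show ?thesis .
qed

lemma supermodular_on_add_card_mono:
  assumes sm: "supermodular_on W h" and nn: "nonneg_on W h"
    and "Z \<subseteq> Z'" "Z' \<subseteq> W" "finite Z'"
  shows "h Z + real (card Z) * h {} \<le> h Z' + real (card Z') * h {}"
proof (cases "Z = Z'")
  case False
  define D where "D = Z' - Z"
  have Z': "Z' = Z \<union> D" "Z \<inter> D = {}" using \<open>Z \<subseteq> Z'\<close> unfolding D_def by auto
  have fin: "finite Z" "finite D" using assms unfolding D_def by (auto intro: finite_subset)
  have "D \<noteq> {}" using False Z' by auto
  then have "1 \<le> card D" using fin by (simp add: Suc_le_eq card_gt_0_iff)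
  have "Z \<subseteq> W" "D \<subseteq> W" using assms unfolding D_def by auto
  then have "0 \<le> h D" "0 \<le> h {}" using nn unfolding nonneg_on_def by auto
  with \<open>1 \<le> card D\<close> have "h {} \<le> real (card D) * h {}" by (simp add: mult_le_cancel_right1)
  have "h Z + h D \<le> h (Z \<union> D) + h (Z \<inter> D)"
    using supermodular_onD[OF sm \<open>Z \<subseteq> W\<close> \<open>D \<subseteq> W\<close>] .
  then have "h Z + h D \<le> h Z' + h {}" using Z' by simp
  moreover have "real (card Z') * h {} = real (card Z) * h {} + real (card D) * h {}"
    using Z' fin by (simp add: card_Un_disjoint distrib_right)
  ultimately show ?thesis using \<open>0 \<le> h D\<close> \<open>h {} \<le> real (card D) * h {}\<close> by linarith
qed simp

lemma batch_greedy_run_Suc: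
  assumes "batch_greedy_run g U p k Ts" "Suc j \<le> k div p"
  obtains S where "S \<subseteq> U - Ts j" "card S = p" "Ts (Suc j) = Ts j \<union> S"
    "\<And>S'. S' \<subseteq> U - Ts j \<Longrightarrow> card S' = p \<Longrightarrow> g (Ts j \<union> S') \<le> g (Ts j \<union> S)"
proof -
  have "Suc j \<in> {1..k div p}" using assms(2) by simp
  with assms(1) have "\<exists>S. S \<subseteq> U - Ts j \<and> card S = p \<and>
      (\<forall>S'. S' \<subseteq> U - Ts j \<longrightarrow> card S' = p \<longrightarrow> g (Ts j \<union> S') \<le> g (Ts j \<union> S)) \<and> Ts (Suc j) = Ts j \<union> S"
    unfolding batch_greedy_run_def by (metis diff_Suc_1)
  then show thesis using that by blast
qed

lemma batch_greedy_run_0: "batch_greedy_run g U p k Ts \<Longrightarrow> Ts 0 = {}"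
  unfolding batch_greedy_run_def by blast

lemma batch_greedy_run_subset_card:
  assumes run: "batch_greedy_run g U p k Ts" and "finite U" "j \<le> k div p"
  shows "Ts j \<subseteq> U \<and> card (Ts j) = j * p"
  using \<open>j \<le> k div p\<close>
proof (induction j)
  case 0
  then show ?case using batch_greedy_run_0[OF run] by simp
next
  case (Suc j)
  obtain S where S: "S \<subseteq> U - Ts j" "card S = p" "Ts (Suc j) = Ts j \<union> S"
    using batch_greedy_run_Suc[OF run Suc.prems] by blast
  have IH: "Ts j \<subseteq> U" "card (Ts j) = j * p" using Suc by simp_all
  have "S \<subseteq> U" "Ts j \<inter> S = {}" using S(1) by auto
  moreover have "finite S" "finite (Ts j)"
    using calculation(1) IH(1) \<open>finite U\<close> by (auto dest: finite_subset)
  ultimately show ?case using S(2,3) IH by (simp add: card_Un_disjoint)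
qed

lemma batch_greedy_run_mono:
  assumes run: "batch_greedy_run g U p k Ts" and "i \<le> j" "j \<le> k div p"
  shows "Ts i \<subseteq> Ts j"
  using assms(2,3)
proof (induction j)
  case (Suc j)
  show ?case
  proof (cases "i = Suc j")
    case False
    obtain S where "Ts (Suc j) = Ts j \<union> S"
      by (rule batch_greedy_run_Suc[OF run Suc.prems(2)])
    moreover have "Ts i \<subseteq> Ts j"
      using Suc.IH Suc.prems Suc_leD False le_Suc_eq by blast
    ultimately show ?thesis by blast
  qed simp
qed simp

locale local_monotone_sum =
  fixes I :: "'i set" and W :: "'i \<Rightarrow> 'a set" and p :: nat
    and phi :: "'i \<Rightarrow> 'a set \<Rightarrow> real" and a :: "'i \<Rightarrow> real"
  assumes finite_I: "finite I"
    and finite_W: "i \<in> I \<Longrightarrow> finite (W i)"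
    and card_W: "i \<in> I \<Longrightarrow> card (W i) \<le> p"
    and phi_local: "i \<in> I \<Longrightarrow> phi i Z = phi i (Z \<inter> W i)"
    and phi_mono: "i \<in> I \<Longrightarrow> Z \<subseteq> Z' \<Longrightarrow> phi i Z \<le> phi i Z'"
    and phi_empty: "i \<in> I \<Longrightarrow> phi i {} = 0"
    and a_nonneg: "i \<in> I \<Longrightarrow> 0 \<le> a i"
begin

definition psi :: "'a set \<Rightarrow> real" where
  "psi Z = (\<Sum>i\<in>I. phi i Z)"

definition lin :: "'a set \<Rightarrow> real" where
  "lin Z = (\<Sum>i\<in>I. real (card (Z \<inter> W i)) * a i)"

definition obj :: "'a set \<Rightarrow> real" where
  "obj Z = psi Z - lin Z"

lemma psi_mono: "Z \<subseteq> Z' \<Longrightarrow> psi Z \<le> psi Z'"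
  unfolding psi_def by (intro sum_mono phi_mono)

lemma psi_nonneg: "0 \<le> psi Z"
  using psi_mono[of "{}" Z] by (simp add: psi_def phi_empty)

lemma lin_nonneg: "0 \<le> lin Z"
  unfolding lin_def by (intro sum_nonneg mult_nonneg_nonneg a_nonneg) auto

lemma obj_le_psi: "obj Z \<le> psi Z"
  using lin_nonneg[of Z] by (simp add: obj_def)

lemma obj_empty: "obj {} = 0"
  by (simp add: obj_def psi_def lin_def phi_empty)

lemma lin_le: "lin Z \<le> real p * (\<Sum>i\<in>I. a i)"
  unfolding lin_def sum_distrib_left
proof (intro sum_mono mult_right_mono a_nonneg)
  fix i assume "i \<in> I"
  then have "card (Z \<inter> W i) \<le> p"
    using card_mono[OF finite_W, of i "Z \<inter> W i"] card_W[of i] by simp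
  then show "real (card (Z \<inter> W i)) \<le> real p" by simp
qed

lemma lin_Un_disjoint: "A \<inter> B = {} \<Longrightarrow> lin (A \<union> B) = lin A + lin B"
  unfolding lin_def sum.distrib[symmetric] distrib_right[symmetric]
proof (intro sum.cong refl arg_cong2[where f = "(*)"])
  fix i assume "A \<inter> B = {}" "i \<in> I"
  moreover have "(A \<union> B) \<inter> W i = (A \<inter> W i) \<union> (B \<inter> W i)" by blast
  ultimately show "real (card ((A \<union> B) \<inter> W i)) = real (card (A \<inter> W i)) + real (card (B \<inter> W i))"
    using finite_W[of i] by (simp add: card_Un_disjoint disjoint_iff)
qed

lemma psi_increment_le_sum_subsets:
  assumes "finite M" "p \<le> card M"
  shows "psi (A \<union> M) - psi A \<le> (\<Sum>P | P \<subseteq> M \<and> card P = p. psi (A \<union> P) - psi A)"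
proof -
  let ?F = "{P. P \<subseteq> M \<and> card P = p}"
  have "phi i (A \<union> M) - phi i A \<le> (\<Sum>P\<in>?F. phi i (A \<union> P) - phi i A)" if i: "i \<in> I" for i
  proof -
    have "card (M \<inter> W i) \<le> p"
      using card_mono[OF finite_W[OF i], of "M \<inter> W i"] card_W[OF i] by simp
    then obtain P where P: "M \<inter> W i \<subseteq> P" "P \<subseteq> M" "card P = p"
      using exists_subset_between[of "M \<inter> W i" p M] assms by auto
    then have "(A \<union> M) \<inter> W i = (A \<union> P) \<inter> W i" by blast
    then have "phi i (A \<union> M) = phi i (A \<union> P)" by (metis phi_local[OF i])
    also have "phi i (A \<union> P) - phi i A \<le> (\<Sum>P\<in>?F. phi i (A \<union> P) - phi i A)"
      using P assms by (intro member_le_sum) (auto intro: phi_mono[OF i])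
    finally show ?thesis by simp
  qed
  then have "(\<Sum>i\<in>I. phi i (A \<union> M) - phi i A) \<le> (\<Sum>i\<in>I. \<Sum>P\<in>?F. phi i (A \<union> P) - phi i A)"
    by (rule sum_mono)
  then show ?thesis
    unfolding psi_def sum_subtractf[symmetric] by (subst sum.swap)
qed

lemma sum_lin_subsets_le:
  assumes "finite M"
  shows "(\<Sum>P | P \<subseteq> M \<and> card P = p. lin P) \<le> real ((card M - 1) choose (p - 1)) * lin M"
proof -
  let ?F = "{P. P \<subseteq> M \<and> card P = p}" and ?C = "(card M - 1) choose (p - 1)"
  have "(\<Sum>P\<in>?F. lin P) = (\<Sum>i\<in>I. real (\<Sum>P\<in>?F. card (P \<inter> W i)) * a i)"
    unfolding lin_def by (subst sum.swap) (simp add: sum_distrib_right)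
  also have "\<dots> \<le> (\<Sum>i\<in>I. real (card (M \<inter> W i) * ?C) * a i)"
  proof (intro sum_mono mult_right_mono a_nonneg)
    fix i show "real (\<Sum>P\<in>?F. card (P \<inter> W i)) \<le> real (card (M \<inter> W i) * ?C)"
      using sum_card_Int_subsets_le[OF assms, of "W i" p] by (simp only: of_nat_le_iff)
  qed
  also have "\<dots> = real ?C * lin M"
    unfolding lin_def sum_distrib_left by (simp add: algebra_simps)
  finally show ?thesis .
qed

lemma exists_subset_obj_gain:
  assumes "finite M" "p \<le> card M" "A \<inter> M = {}"
  shows "\<exists>P\<subseteq>M. card P = p \<and>
    psi (A \<union> M) - psi A - real ((card M - 1) choose (p - 1)) * lin M
      \<le> real (card M choose p) * (obj (A \<union> P) - obj A)"
proof -
  let ?F = "{P. P \<subseteq> M \<and> card P = p}"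
  obtain P0 where "P0 \<subseteq> M" "card P0 = p"
    using obtain_subset_with_card_n[OF assms(2)] by metis
  then have "?F \<noteq> {}" by blast
  then obtain P where P: "P \<in> ?F"
    and avg: "(\<Sum>P\<in>?F. obj (A \<union> P) - obj A) \<le> real (card ?F) * (obj (A \<union> P) - obj A)"
    using ex_sum_le_card_mult[of ?F "\<lambda>P. obj (A \<union> P) - obj A"] assms(1) by auto
  have "obj (A \<union> Q) - obj A = (psi (A \<union> Q) - psi A) - lin Q" if "Q \<in> ?F" for Q
  proof -
    have "A \<inter> Q = {}" using that assms(3) by blast
    then show ?thesis using lin_Un_disjoint[of A Q] unfolding obj_def by simp
  qed
  then have "(\<Sum>P\<in>?F. obj (A \<union> P) - obj A) = (\<Sum>P\<in>?F. psi (A \<union> P) - psi A) - (\<Sum>P\<in>?F. lin P)"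
    by (simp add: sum_subtractf)
  moreover have card_F: "card ?F = card M choose p" using assms(1) by (rule n_subsets)
  ultimately have "psi (A \<union> M) - psi A - real ((card M - 1) choose (p - 1)) * lin M
      \<le> real (card M choose p) * (obj (A \<union> P) - obj A)"
    using psi_increment_le_sum_subsets[OF assms(1,2), of A] sum_lin_subsets_le[OF assms(1)] avg[unfolded card_F]
    by linarith
  then show ?thesis using P by blast
qed

lemma greedy_step_gain:
  assumes "finite U" "A \<subseteq> U" "card A + p \<le> k" "k \<le> card U" "Y \<subseteq> U" "card Y \<le> k"
    and lin_le: "\<And>Z. lin Z \<le> \<gamma>"
    and S_max: "\<And>S'. S' \<subseteq> U - A \<Longrightarrow> card S' = p \<Longrightarrow> obj (A \<union> S') \<le> obj (A \<union> S)"
    and pos: "0 < psi Y - psi A - real ((k - 1) choose (p - 1)) * \<gamma>"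
  shows "psi Y - psi A - real ((k - 1) choose (p - 1)) * \<gamma> \<le> real (k choose p) * (obj (A \<union> S) - obj A)"
proof -
  have fin: "finite (U - A)" using assms(1) by simp
  have "card (Y - A) \<le> card (U - A)" using assms(5) fin by (intro card_mono) auto
  moreover have "p \<le> card (U - A)"
    using assms(1-4) card_Diff_subset[of A U] finite_subset[of A U] by linarith
  ultimately obtain M where M: "Y - A \<subseteq> M" "M \<subseteq> U - A" "card M = max p (card (Y - A))"
    using exists_subset_between[of "Y - A" "max p (card (Y - A))" "U - A"] fin assms(5) by auto
  have "card (Y - A) \<le> k"
    using card_mono[of Y "Y - A"] finite_subset[OF assms(5,1)] assms(6) by auto
  then have card_M: "p \<le> card M" "card M \<le> k" using M(3) assms(3) by auto
  have "finite M" "A \<inter> M = {}" using M(2) fin finite_subset by auto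
  then obtain P where P: "P \<subseteq> M" "card P = p"
    and gain: "psi (A \<union> M) - psi A - real ((card M - 1) choose (p - 1)) * lin M
      \<le> real (card M choose p) * (obj (A \<union> P) - obj A)"
    using exists_subset_obj_gain[of M A] card_M(1) by blast
  have "psi Y \<le> psi (A \<union> M)" using M(1) by (intro psi_mono) blast
  moreover have "real ((card M - 1) choose (p - 1)) * lin M \<le> real ((k - 1) choose (p - 1)) * \<gamma>"
    using card_M(2) lin_nonneg[of M] lin_le[of M]
    by (intro mult_mono) (simp_all add: binomial_right_mono)
  moreover have "obj (A \<union> P) \<le> obj (A \<union> S)" using P M(2) by (intro S_max) auto
  then have "real (card M choose p) * (obj (A \<union> P) - obj A) \<le> real (card M choose p) * (obj (A \<union> S) - obj A)"
    by (intro mult_left_mono) simp_all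
  ultimately have le: "psi Y - psi A - real ((k - 1) choose (p - 1)) * \<gamma>
      \<le> real (card M choose p) * (obj (A \<union> S) - obj A)"
    using gain by linarith
  have "0 \<le> obj (A \<union> S) - obj A"
  proof (rule ccontr)
    assume "\<not> 0 \<le> obj (A \<union> S) - obj A"
    then have "real (card M choose p) * (obj (A \<union> S) - obj A) \<le> 0"
      by (intro mult_nonneg_nonpos) simp_all
    then show False using le pos by linarith
  qed
  then have "real (card M choose p) * (obj (A \<union> S) - obj A) \<le> real (k choose p) * (obj (A \<union> S) - obj A)"
    using card_M(2) by (intro mult_right_mono) (simp_all add: binomial_right_mono)
  then show ?thesis using le by linarith
qed

lemma batch_greedy_step_gain:
  assumes "finite U" "k \<le> card U" and run: "batch_greedy_run obj U p k Ts" and j: "Suc j \<le> k div p"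
    and Y: "Y \<subseteq> U" "card Y \<le> k" and gamma: "\<And>Z. lin Z \<le> \<gamma>"
    and pos: "0 < psi Y - psi (Ts j) - real ((k - 1) choose (p - 1)) * \<gamma>"
  shows "psi Y - psi (Ts j) - real ((k - 1) choose (p - 1)) * \<gamma>
    \<le> real (k choose p) * (obj (Ts (Suc j)) - obj (Ts j))"
proof -
  obtain S where "S \<subseteq> U - Ts j" "card S = p" and S: "Ts (Suc j) = Ts j \<union> S"
    and S_max: "\<And>S'. S' \<subseteq> U - Ts j \<Longrightarrow> card S' = p \<Longrightarrow> obj (Ts j \<union> S') \<le> obj (Ts j \<union> S)"
    using batch_greedy_run_Suc[OF run j] by metis
  have Ts_j: "Ts j \<subseteq> U" "card (Ts j) = j * p"
    using batch_greedy_run_subset_card[OF run assms(1), of j] j by simp_all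
  have "Suc j * p \<le> k div p * p" using mult_le_mono1[OF j] .
  also have "\<dots> \<le> k" by (rule div_times_less_eq_dividend)
  finally have "card (Ts j) + p \<le> k" using Ts_j(2) by simp
  from greedy_step_gain[OF assms(1) Ts_j(1) this assms(2) Y gamma S_max pos]
  show ?thesis unfolding S .
qed

text \<open>If psi Y exceeds \<Gamma> + B \<gamma> by X > 0, each of the t = k div p greedy blocks raises obj
  by at least X / (k choose p), while obj stays below \<Gamma>; since k choose p \<le> 2 t B, this bounds X.\<close>
lemma batch_greedy_bound:
  assumes "finite U" "0 < p" "p \<le> k" "k \<le> card U"
    and run: "batch_greedy_run obj U p k Ts"
    and Gamma: "psi (Ts (k div p)) \<le> \<Gamma>" and gamma: "\<And>Z. lin Z \<le> \<gamma>"
    and Y: "Y \<subseteq> U" "card Y \<le> k"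
  shows "psi Y \<le> real ((k - 1) choose (p - 1)) * (3 * \<Gamma> + \<gamma>)"
proof -
  define t where "t = k div p"
  define B where "B = real ((k - 1) choose (p - 1))"
  define N where "N = real (k choose p)"
  define X where "X = psi Y - \<Gamma> - B * \<gamma>"
  have "1 \<le> t" using assms(2,3) div_le_mono[of p k p] unfolding t_def by simp
  have "1 \<le> B" using assms(3) unfolding B_def by (simp add: Suc_leI)
  have "0 \<le> \<Gamma>" using psi_nonneg Gamma by (rule order_trans)
  have psi_Ts: "psi (Ts j) \<le> \<Gamma>" if "j \<le> t" for j
    using psi_mono[OF batch_greedy_run_mono[OF run that[unfolded t_def] order_refl]] Gamma by simp
  have "X \<le> 2 * B * \<Gamma>"
  proof (cases "X \<le> 0")
    case False
    have gain: "X \<le> N * (obj (Ts (Suc j)) - obj (Ts j))" if "Suc j \<le> t" for j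
      using batch_greedy_step_gain[OF assms(1,4) run that[unfolded t_def] Y gamma] False
        psi_Ts[of j] that unfolding X_def B_def N_def by simp
    have "real j * X \<le> N * obj (Ts j)" if "j \<le> t" for j
      using that
    proof (induction j)
      case 0
      then show ?case using batch_greedy_run_0[OF run] obj_empty by simp
    next
      case (Suc j)
      have "real j * X \<le> N * obj (Ts j)" "X \<le> N * (obj (Ts (Suc j)) - obj (Ts j))"
        using Suc gain[of j] by simp_all
      then show ?case by (simp add: distrib_right right_diff_distrib)
    qed
    from this[OF order_refl] have "real t * X \<le> N * obj (Ts t)" .
    also have "\<dots> \<le> N * \<Gamma>"
      using obj_le_psi[of "Ts t"] psi_Ts[of t] unfolding N_def by (intro mult_left_mono) simp_all
    also have "\<dots> \<le> (2 * real t * B) * \<Gamma>"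
    proof (intro mult_right_mono \<open>0 \<le> \<Gamma>\<close>)
      show "N \<le> 2 * real t * B"
        using choose_le_twice_div_mult_choose[OF assms(2,3)] unfolding N_def B_def t_def
        by (metis of_nat_le_iff of_nat_mult of_nat_numeral)
    qed
    finally have "real t * X \<le> real t * (2 * B * \<Gamma>)" by (simp add: algebra_simps)
    then show ?thesis using \<open>1 \<le> t\<close> by simp
  next
    case True
    moreover have "0 \<le> 2 * B * \<Gamma>" using \<open>1 \<le> B\<close> \<open>0 \<le> \<Gamma>\<close> by simp
    ultimately show ?thesis by linarith
  qed
  moreover have "\<Gamma> \<le> B * \<Gamma>" using \<open>1 \<le> B\<close> \<open>0 \<le> \<Gamma>\<close> by (simp add: mult_le_cancel_right1)
  ultimately show ?thesis unfolding X_def B_def by (simp add: algebra_simps)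
qed

end

lemma supermodular_on_f_sup:
  assumes "\<And>i. i < m \<Longrightarrow> supermodular_on (Vs i) (fs i)"
  shows "supermodular_on UNIV (f_sup m Vs fs S)"
  unfolding supermodular_on_def
proof (intro allI impI)
  fix A B :: "'a set"
  let ?I = "{i. i < m \<and> Vs i \<inter> S \<noteq> {}}"
  have "fs i ((S \<union> A) \<inter> Vs i) + fs i ((S \<union> B) \<inter> Vs i)
      \<le> fs i ((S \<union> (A \<union> B)) \<inter> Vs i) + fs i ((S \<union> A \<inter> B) \<inter> Vs i)" if "i \<in> ?I" for i
  proof -
    have "(S \<union> A) \<inter> Vs i \<union> (S \<union> B) \<inter> Vs i = (S \<union> (A \<union> B)) \<inter> Vs i"
      "(S \<union> A) \<inter> Vs i \<inter> ((S \<union> B) \<inter> Vs i) = (S \<union> A \<inter> B) \<inter> Vs i" by blast+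
    then show ?thesis
      using supermodular_onD[OF assms, of i "(S \<union> A) \<inter> Vs i" "(S \<union> B) \<inter> Vs i"] that by simp
  qed
  then show "f_sup m Vs fs S A + f_sup m Vs fs S B
      \<le> f_sup m Vs fs S (A \<union> B) + f_sup m Vs fs S (A \<inter> B)"
    unfolding f_sup_def sum.distrib[symmetric] by (intro sum_mono) (simp add: algebra_simps)
qed

lemma f_sup_le:
  assumes "r_decomposition r V f m Vs fs" "S \<union> T \<subseteq> V"
  shows "f_sup m Vs fs S T \<le> f (S \<union> T)"
proof -
  have nn: "0 \<le> fs i X" if "i < m" "X \<subseteq> Vs i" for i X
    using assms(1) that unfolding r_decomposition_def nonneg_on_def by blast
  have "f_sup m Vs fs S T \<le> (\<Sum>i\<in>{i. i < m \<and> Vs i \<inter> S \<noteq> {}}. fs i ((S \<union> T) \<inter> Vs i))"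
    unfolding f_sup_def by (intro sum_mono) (simp add: nn)
  also have "\<dots> \<le> (\<Sum>i<m. fs i ((S \<union> T) \<inter> Vs i))"
    by (intro sum_mono2) (auto simp: nn)
  also have "\<dots> = f (S \<union> T)"
    using assms unfolding r_decomposition_def by simp
  finally show ?thesis .
qed

lemma f_sup_marginal_nonzero:
  assumes "f_sup m Vs fs S X \<noteq> f_sup m Vs fs S (X - {u})"
  shows "\<exists>i<m. Vs i \<inter> S \<noteq> {} \<and> u \<in> Vs i"
proof (rule ccontr)
  assume "\<not> ?thesis"
  then have "(S \<union> X) \<inter> Vs i = (S \<union> (X - {u})) \<inter> Vs i" if "i < m" "Vs i \<inter> S \<noteq> {}" for i
    using that by blast
  then have "f_sup m Vs fs S X = f_sup m Vs fs S (X - {u})"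
    unfolding f_sup_def by (intro sum.cong) simp_all
  then show False using assms by contradiction
qed

lemma f_le_sum_f_sup:
  assumes dec: "r_decomposition r V f m Vs fs" and "T \<subseteq> V" "finite T"
  shows "f T \<le> f {} + (\<Sum>w\<in>T. f_sup m Vs fs {w} (T - {w}) + f {w})"
proof -
  have nn: "0 \<le> fs i X" if "i < m" "X \<subseteq> Vs i" for i X
    using dec that unfolding r_decomposition_def nonneg_on_def by blast
  have f_eq: "f X = (\<Sum>i<m. fs i (X \<inter> Vs i))" if "X \<subseteq> V" for X
    using dec that unfolding r_decomposition_def by blast
  have "fs i (T \<inter> Vs i) \<le> fs i {} + (\<Sum>w\<in>T. if w \<in> Vs i then fs i (T \<inter> Vs i) else 0)" if "i < m" for i
  proof (cases "T \<inter> Vs i = {}")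
    case False
    then have "1 \<le> card (T \<inter> Vs i)" using \<open>finite T\<close> by (simp add: Suc_le_eq card_gt_0_iff)
    then have "fs i (T \<inter> Vs i) \<le> real (card (T \<inter> Vs i)) * fs i (T \<inter> Vs i)"
      using nn[OF that, of "T \<inter> Vs i"] by (simp add: mult_le_cancel_right1)
    also have "\<dots> = (\<Sum>w\<in>T. if w \<in> Vs i then fs i (T \<inter> Vs i) else 0)"
      using \<open>finite T\<close> by (simp add: sum.If_cases Int_def)
    finally have "fs i (T \<inter> Vs i) \<le> (\<Sum>w\<in>T. if w \<in> Vs i then fs i (T \<inter> Vs i) else 0)" .
    then show ?thesis using nn[OF that, of "{}"] by simp
  qed (simp add: nn[OF that] sum_nonneg)
  then have "f T \<le> (\<Sum>i<m. fs i {} + (\<Sum>w\<in>T. if w \<in> Vs i then fs i (T \<inter> Vs i) else 0))"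
    unfolding f_eq[OF \<open>T \<subseteq> V\<close>] by (intro sum_mono) simp
  also have "\<dots> = (\<Sum>i<m. fs i {}) + (\<Sum>i<m. \<Sum>w\<in>T. if w \<in> Vs i then fs i (T \<inter> Vs i) else 0)"
    by (rule sum.distrib)
  also have "(\<Sum>i<m. \<Sum>w\<in>T. if w \<in> Vs i then fs i (T \<inter> Vs i) else 0)
      = (\<Sum>w\<in>T. \<Sum>i\<in>{i. i < m \<and> Vs i \<inter> {w} \<noteq> {}}. fs i (T \<inter> Vs i))"
    by (subst sum.swap) (simp add: sum.If_cases Int_def conj_commute)
  also have "\<dots> \<le> (\<Sum>w\<in>T. f_sup m Vs fs {w} (T - {w}) + f {w})"
  proof (intro sum_mono)
    fix w assume "w \<in> T"
    let ?I = "{i. i < m \<and> Vs i \<inter> {w} \<noteq> {}}"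
    have "(\<Sum>i\<in>?I. fs i (T \<inter> Vs i)) = f_sup m Vs fs {w} (T - {w}) + (\<Sum>i\<in>?I. fs i ({w} \<inter> Vs i))"
      using \<open>w \<in> T\<close> unfolding f_sup_def sum.distrib[symmetric] by (intro sum.cong) (auto simp: insert_absorb)
    also have "(\<Sum>i\<in>?I. fs i ({w} \<inter> Vs i)) \<le> (\<Sum>i<m. fs i ({w} \<inter> Vs i))"
      by (intro sum_mono2) (auto simp: nn)
    also have "\<dots> = f {w}" using f_eq[of "{w}"] \<open>w \<in> T\<close> \<open>T \<subseteq> V\<close> by (simp add: subset_iff)
    finally show "(\<Sum>i\<in>?I. fs i (T \<inter> Vs i)) \<le> f_sup m Vs fs {w} (T - {w}) + f {w}" by simp
  qed
  finally show ?thesis using f_eq[of "{}"] by simp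
qed

lemma f_sup_le_f_star_set:
  assumes dec: "r_decomposition r V f m Vs fs" and "finite V" "v \<in> V" "T \<subseteq> V - {v}"
  shows "f_sup m Vs fs {v} T \<le> f (star_set m Vs fs v T)"
proof -
  let ?g = "f_sup m Vs fs {v}"
  let ?L = "{u \<in> T. ?g T - ?g (T - {u}) > 0}"
  have "supermodular_on UNIV ?g"
    using dec unfolding r_decomposition_def by (intro supermodular_on_f_sup) simp
  moreover have "finite T" using assms(2,4) finite_subset by blast
  ultimately have "?g T \<le> ?g ?L" by (rule supermodular_on_le_positive_marginals[OF _ subset_UNIV])
  also have "\<dots> \<le> f ({v} \<union> ?L)" using dec assms(3,4) by (intro f_sup_le) auto
  also have "{v} \<union> ?L = star_set m Vs fs v T" unfolding star_set_def by blast
  finally show ?thesis .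
qed

lemma connected_set_star:
  assumes "v \<in> S" "\<And>u. u \<in> S \<Longrightarrow> u \<noteq> v \<Longrightarrow> adj m Vs v u"
  shows "connected_set m Vs S"
proof -
  let ?R = "\<lambda>a b. a \<in> S \<and> b \<in> S \<and> adj m Vs a b"
  have path: "?R\<^sup>*\<^sup>* v u \<and> ?R\<^sup>*\<^sup>* u v" if "u \<in> S" for u
  proof (cases "u = v")
    case False
    then have "adj m Vs v u" "adj m Vs u v" using assms(2) that unfolding adj_def by blast+
    then show ?thesis using assms(1) that by (auto intro!: r_into_rtranclp)
  qed simp
  show ?thesis unfolding connected_set_def
  proof (intro conjI ballI)
    show "S \<noteq> {}" using assms(1) by blast
    fix x y assume "x \<in> S" "y \<in> S"
    then show "?R\<^sup>*\<^sup>* x y" using path[of x] path[of y] by (meson rtranclp_trans)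
  qed
qed

lemma connected_set_star_set:
  assumes "v \<notin> Tv"
  shows "connected_set m Vs (star_set m Vs fs v Tv)"
proof (rule connected_set_star)
  show "v \<in> star_set m Vs fs v Tv" unfolding star_set_def by simp
  fix u assume "u \<in> star_set m Vs fs v Tv" "u \<noteq> v"
  then have "u \<in> Tv" "f_sup m Vs fs {v} Tv \<noteq> f_sup m Vs fs {v} (Tv - {u})"
    unfolding star_set_def by auto
  then obtain i where "i < m" "Vs i \<inter> {v} \<noteq> {}" "u \<in> Vs i"
    using f_sup_marginal_nonzero[of m Vs fs "{v}" Tv u] by blast
  then show "adj m Vs v u" using \<open>u \<in> Tv\<close> assms unfolding adj_def by blast
qed

text \<open>The i-th summand of f^{v} plus a linear correction that makes it monotone
  (supermodular_on_add_card_mono); the corrections add up to local_monotone_sum.lin.\<close>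
definition star_part :: "(nat \<Rightarrow> 'a set) \<Rightarrow> (nat \<Rightarrow> 'a set \<Rightarrow> real) \<Rightarrow> 'a \<Rightarrow> nat \<Rightarrow> 'a set \<Rightarrow> real" where
  "star_part Vs fs v i Z =
     fs i (insert v Z \<inter> Vs i) - fs i {v} + real (card (Z \<inter> (Vs i - {v}))) * fs i {}"

lemma local_monotone_sum_star_part:
  assumes dec: "r_decomposition r V f m Vs fs" and "finite V"
  shows "local_monotone_sum {i. i < m \<and> Vs i \<inter> {v} \<noteq> {}} (\<lambda>i. Vs i - {v}) (r - 1)
           (star_part Vs fs v) (\<lambda>i. fs i {})"
proof
  let ?I = "{i. i < m \<and> Vs i \<inter> {v} \<noteq> {}}"
  have Vs: "Vs i \<subseteq> V" "card (Vs i) \<le> r" "nonneg_on (Vs i) (fs i)" "supermodular_on (Vs i) (fs i)"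
    if "i < m" for i
    using dec that unfolding r_decomposition_def by auto
  then have fin: "finite (Vs i)" if "i < m" for i using \<open>finite V\<close> that finite_subset by blast
  show "finite ?I" by simp
  fix i assume i: "i \<in> ?I"
  then have "i < m" "v \<in> Vs i" by auto
  show "finite (Vs i - {v})" using fin[OF \<open>i < m\<close>] by simp
  show "card (Vs i - {v}) \<le> r - 1" using Vs(2)[OF \<open>i < m\<close>] \<open>v \<in> Vs i\<close> fin[OF \<open>i < m\<close>] by simp
  show "0 \<le> fs i {}" using Vs(3)[OF \<open>i < m\<close>] unfolding nonneg_on_def by simp
  show "star_part Vs fs v i {} = 0" using \<open>v \<in> Vs i\<close> unfolding star_part_def by simp
  fix Z Z' :: "'a set"
  show "star_part Vs fs v i Z = star_part Vs fs v i (Z \<inter> (Vs i - {v}))"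
  proof -
    have "insert v Z \<inter> Vs i = insert v (Z \<inter> (Vs i - {v})) \<inter> Vs i" by blast
    then show ?thesis unfolding star_part_def by (simp add: Int_assoc)
  qed
  assume "Z \<subseteq> Z'"
  have card_eq: "card (insert v X \<inter> Vs i) = card (X \<inter> (Vs i - {v})) + 1" for X
  proof -
    have "insert v X \<inter> Vs i = insert v (X \<inter> (Vs i - {v}))" using \<open>v \<in> Vs i\<close> by blast
    then show ?thesis using fin[OF \<open>i < m\<close>] by simp
  qed
  have "fs i (insert v Z \<inter> Vs i) + real (card (insert v Z \<inter> Vs i)) * fs i {}
      \<le> fs i (insert v Z' \<inter> Vs i) + real (card (insert v Z' \<inter> Vs i)) * fs i {}"
    using \<open>Z \<subseteq> Z'\<close> fin[OF \<open>i < m\<close>] Vs(3,4)[OF \<open>i < m\<close>]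
    by (intro supermodular_on_add_card_mono) auto
  then show "star_part Vs fs v i Z \<le> star_part Vs fs v i Z'"
    unfolding star_part_def card_eq by (simp add: algebra_simps)
qed

lemma obj_star_part:
  assumes "r_decomposition r V f m Vs fs" "finite V"
  shows "local_monotone_sum.obj {i. i < m \<and> Vs i \<inter> {v} \<noteq> {}} (\<lambda>i. Vs i - {v})
           (star_part Vs fs v) (\<lambda>i. fs i {}) = f_sup m Vs fs {v}"
proof -
  interpret local_monotone_sum "{i. i < m \<and> Vs i \<inter> {v} \<noteq> {}}" "\<lambda>i. Vs i - {v}" "r - 1"
      "star_part Vs fs v" "\<lambda>i. fs i {}"
    using assms by (rule local_monotone_sum_star_part)
  show ?thesis
    unfolding fun_eq_iff obj_def psi_def lin_def f_sup_def star_part_def sum_subtractf[symmetric]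
    by (auto intro: sum.cong)
qed

lemma f_sup_le_star_bound:
  assumes Fr: "in_Fr_with r V f m Vs fs" and "2 \<le> r" "r \<le> k" "k \<le> card V" "v \<in> V"
    and Tv: "Tv \<in> batch_greedy_outputs (f_sup m Vs fs {v}) (V - {v}) (r - 1) (k - 1)"
    and F: "f (star_set m Vs fs v Tv) \<le> F" "f {} \<le> F"
    and Y: "Y \<subseteq> V - {v}" "card Y \<le> k - 1"
  shows "f_sup m Vs fs {v} Y \<le> real ((k - 2) choose (r - 2)) * (4 * real r) * F"
proof -
  have dec: "r_decomposition r V f m Vs fs" and "finite V"
    using Fr unfolding in_Fr_with_def by simp_all
  interpret local_monotone_sum "{i. i < m \<and> Vs i \<inter> {v} \<noteq> {}}" "\<lambda>i. Vs i - {v}" "r - 1"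
      "star_part Vs fs v" "\<lambda>i. fs i {}"
    using dec \<open>finite V\<close> by (rule local_monotone_sum_star_part)
  have obj: "obj = f_sup m Vs fs {v}"
    using dec \<open>finite V\<close> by (rule obj_star_part)
  obtain Ts where run: "batch_greedy_run obj (V - {v}) (r - 1) (k - 1) Ts"
    and "Ts ((k - 1) div (r - 1)) \<subseteq> Tv" "Tv \<subseteq> V - {v}"
    using Tv unfolding batch_greedy_outputs_def obj by blast
  have "f {} = (\<Sum>i<m. fs i {})" using dec unfolding r_decomposition_def by simp
  also have "(\<Sum>i\<in>{i. i < m \<and> Vs i \<inter> {v} \<noteq> {}}. fs i {}) \<le> \<dots>"
    using dec unfolding r_decomposition_def nonneg_on_def by (intro sum_mono2) auto
  finally have "(\<Sum>i\<in>{i. i < m \<and> Vs i \<inter> {v} \<noteq> {}}. fs i {}) \<le> F" using F(2) by linarith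
  then have lin_le_F: "lin Z \<le> real (r - 1) * F" for Z
    using lin_le[of Z] mult_left_mono[of _ F "real (r - 1)"] by fastforce
  have "0 \<le> F" using F(2) Fr unfolding in_Fr_with_def nonneg_on_def by fastforce
  have "obj Tv \<le> F"
    using f_sup_le_f_star_set[OF dec \<open>finite V\<close> \<open>v \<in> V\<close> \<open>Tv \<subseteq> V - {v}\<close>] F(1) unfolding obj by simp
  then have "psi Tv \<le> real r * F"
    using lin_le_F[of Tv] \<open>2 \<le> r\<close> unfolding obj_def by (simp add: of_nat_diff algebra_simps)
  then have "psi (Ts ((k - 1) div (r - 1))) \<le> real r * F"
    using psi_mono[OF \<open>Ts ((k - 1) div (r - 1)) \<subseteq> Tv\<close>] by simp
  then have "psi Y \<le> real ((k - 1 - 1) choose (r - 1 - 1)) * (3 * (real r * F) + real (r - 1) * F)"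
    using \<open>finite V\<close> assms(2-5) Y
    by (intro batch_greedy_bound[OF _ _ _ _ run _ lin_le_F]) auto
  also have "\<dots> \<le> real ((k - 2) choose (r - 2)) * (4 * real r * F)"
  proof -
    have "real (r - 1) * F \<le> real r * F" using \<open>0 \<le> F\<close> by (intro mult_right_mono) simp_all
    moreover have "k - 1 - 1 = k - 2" "r - 1 - 1 = r - 2" by simp_all
    ultimately show ?thesis by (simp only:) (intro mult_left_mono; simp add: mult.commute)
  qed
  finally show ?thesis using obj_le_psi[of Y] unfolding obj by simp
qed

lemma connected_set_card_eq_1:
  assumes "\<And>i. i < m \<Longrightarrow> finite (Vs i) \<and> card (Vs i) \<le> 1" "connected_set m Vs S"
  shows "card S = 1"
proof -
  have no_adj: "\<not> adj m Vs a b" for a b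
  proof
    assume "adj m Vs a b"
    then obtain i where "i < m" "a \<in> Vs i" "b \<in> Vs i" "a \<noteq> b" unfolding adj_def by blast
    then have "card {a, b} \<le> card (Vs i)" using assms(1) by (intro card_mono) auto
    then show False using assms(1)[OF \<open>i < m\<close>] \<open>a \<noteq> b\<close> by simp
  qed
  obtain x where "x \<in> S" using assms(2) unfolding connected_set_def by blast
  have "y = x" if "y \<in> S" for y
  proof -
    have "(\<lambda>a b. a \<in> S \<and> b \<in> S \<and> adj m Vs a b)\<^sup>*\<^sup>* x y"
      using assms(2) \<open>x \<in> S\<close> that unfolding connected_set_def by blast
    then show ?thesis by (cases rule: rtranclp.cases) (simp_all add: no_adj)
  qed
  then have "S = {x}" using \<open>x \<in> S\<close> by blast
  then show ?thesis by simp
qed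

lemma connected_decomposition_block_bound:
  assumes "in_Fr_with r V f m Vs fs" "connected_set m Vs V" "2 \<le> card V"
  shows "2 \<le> r"
proof (rule ccontr)
  assume "\<not> 2 \<le> r"
  then have "finite (Vs i) \<and> card (Vs i) \<le> 1" if "i < m" for i
    using assms(1) that finite_subset unfolding in_Fr_with_def r_decomposition_def by fastforce
  then have "card V = 1" using assms(2) by (rule connected_set_card_eq_1)
  then show False using assms(3) by simp
qed

lemma f_le_of_f_sup_bounds:
  assumes Fr: "in_Fr_with r V f m Vs fs" and "2 \<le> r" "r < k"
    and F: "f {} \<le> F" "\<And>w. w \<in> V \<Longrightarrow> f {w} \<le> F"
    and star: "\<And>w Y. w \<in> V \<Longrightarrow> Y \<subseteq> V - {w} \<Longrightarrow> card Y \<le> k - 1 \<Longrightarrow>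
      f_sup m Vs fs {w} Y \<le> real ((k - 2) choose (r - 2)) * (4 * real r) * F"
    and T: "T \<subseteq> V" "card T \<le> k"
  shows "f T \<le> (4 * real r + 2) * real k ^ (r - 1) * F"
proof -
  define B where "B = real ((k - 2) choose (r - 2))"
  have "finite V" "r_decomposition r V f m Vs fs" "0 \<le> f {}"
    using Fr unfolding in_Fr_with_def nonneg_on_def by simp_all
  then have "finite T" "0 \<le> F" using T(1) F(1) finite_subset by auto
  have "f T \<le> f {} + (\<Sum>w\<in>T. f_sup m Vs fs {w} (T - {w}) + f {w})"
    using \<open>r_decomposition r V f m Vs fs\<close> T(1) \<open>finite T\<close> by (rule f_le_sum_f_sup)
  also have "\<dots> \<le> F + (\<Sum>w\<in>T. B * (4 * real r) * F + F)"
  proof (rule add_mono[OF F(1) sum_mono])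
    fix w assume "w \<in> T"
    then have "card (T - {w}) \<le> k - 1" using T(2) \<open>finite T\<close> by simp
    then show "f_sup m Vs fs {w} (T - {w}) + f {w} \<le> B * (4 * real r) * F + F"
      using star[of w "T - {w}"] F(2)[of w] \<open>w \<in> T\<close> T(1) unfolding B_def by force
  qed
  also have "\<dots> \<le> F + real k * (B * (4 * real r) * F + F)"
    using T(2) \<open>0 \<le> F\<close> unfolding B_def by (simp add: mult_right_mono)
  also have "\<dots> = 4 * real r * (real k * B) * F + (1 + real k) * F" by (simp add: algebra_simps)
  also have "\<dots> \<le> 4 * real r * real k ^ (r - 1) * F + 2 * real k ^ (r - 1) * F"
  proof -
    have "(k - 2) choose (r - 2) \<le> (k - 2) ^ (r - 2)" using assms(3) by (intro binomial_le_pow) simp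
    also have "\<dots> \<le> k ^ (r - 2)" by (intro power_mono) simp_all
    finally have "real k * B \<le> real k * real k ^ (r - 2)"
      unfolding B_def by (intro mult_left_mono) (simp_all add: of_nat_le_iff[symmetric])
    also have "\<dots> = real k ^ Suc (r - 2)" by simp
    also have "Suc (r - 2) = r - 1" using \<open>2 \<le> r\<close> by simp
    finally have kB: "real k * B \<le> real k ^ (r - 1)" .
    have "1 \<le> real k" using assms(3) by simp
    then have "real k ^ 1 \<le> real k ^ (r - 1)" using assms(2) by (intro power_increasing) simp_all
    then have "1 + real k \<le> 2 * real k ^ (r - 1)" using \<open>1 \<le> real k\<close> by (simp only: power_one_right)
    with kB \<open>0 \<le> F\<close> show ?thesis by (intro add_mono mult_right_mono mult_left_mono) simp_all
  qed
  also have "\<dots> = (4 * real r + 2) * real k ^ (r - 1) * F" by (simp add: algebra_simps)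
  finally show ?thesis .
qed

lemma star_exploration_output_approx:
  assumes Fr: "in_Fr_with r V f m Vs fs" and "r < k" "k \<le> card V - 1" "connected_set m Vs V"
    and "S \<in> star_exploration_outputs r V f m Vs fs k"
  shows "S \<subseteq> V \<and> connected_set m Vs S \<and> card S \<le> k \<and>
    (\<forall>T. T \<subseteq> V \<longrightarrow> card T \<le> k \<longrightarrow> f T \<le> (4 * real r + 2) * real k ^ (r - 1) * f S)"
proof -
  obtain Tf v where Tf: "\<And>w. w \<in> V \<Longrightarrow>
        Tf w \<in> batch_greedy_outputs (f_sup m Vs fs {w}) (V - {w}) (r - 1) (k - 1)"
    and "v \<in> V" and S: "S = star_set m Vs fs v (Tf v)"
    and S_max: "\<And>w. w \<in> V \<Longrightarrow> f (star_set m Vs fs w (Tf w)) \<le> f S"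
    using assms(5) unfolding star_exploration_outputs_def by blast
  have "2 \<le> r" using connected_decomposition_block_bound[OF Fr assms(4)] assms(2,3) by simp
  have Tf_sub: "Tf w \<subseteq> V - {w}" "card (Tf w) = k - 1" if "w \<in> V" for w
    using Tf[OF that] unfolding batch_greedy_outputs_def by blast+
  have star_sub: "w \<in> star_set m Vs fs w (Tf w)" "star_set m Vs fs w (Tf w) \<subseteq> insert w (Tf w)" for w
    unfolding star_set_def by auto
  have star_V: "star_set m Vs fs w (Tf w) \<subseteq> V" if "w \<in> V" for w
    using star_sub(2)[of w] Tf_sub(1)[OF that] that by blast
  have "finite V" and f_mono: "\<And>A B. A \<subseteq> V \<Longrightarrow> B \<subseteq> A \<Longrightarrow> f B \<le> f A"
    using Fr unfolding in_Fr_with_def monotone_on_sets_def by simp_all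
  have "v \<notin> Tf v" using Tf_sub(1)[OF \<open>v \<in> V\<close>] by blast
  have "S \<subseteq> V" using star_V[OF \<open>v \<in> V\<close>] S by simp
  moreover have "connected_set m Vs S" unfolding S using \<open>v \<notin> Tf v\<close> by (rule connected_set_star_set)
  moreover have "card S \<le> k"
  proof -
    have "finite (Tf v)" using Tf_sub(1)[OF \<open>v \<in> V\<close>] \<open>finite V\<close> finite_subset by blast
    then have "card S \<le> card (insert v (Tf v))" using S star_sub(2) by (intro card_mono) auto
    also have "\<dots> = Suc (k - 1)" using \<open>finite (Tf v)\<close> \<open>v \<notin> Tf v\<close> Tf_sub(2)[OF \<open>v \<in> V\<close>] by simp
    finally show ?thesis using assms(2) by simp
  qed
  moreover have "f T \<le> (4 * real r + 2) * real k ^ (r - 1) * f S" if "T \<subseteq> V" "card T \<le> k" for T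
  proof (rule f_le_of_f_sup_bounds[OF Fr \<open>2 \<le> r\<close> assms(2) _ _ _ that])
    show "f {} \<le> f S" using f_mono \<open>S \<subseteq> V\<close> by blast
    show "f {w} \<le> f S" if "w \<in> V" for w
      using f_mono[OF star_V[OF that], of "{w}"] star_sub(1)[of w] S_max[OF that] by simp
    show "f_sup m Vs fs {w} Y \<le> real ((k - 2) choose (r - 2)) * (4 * real r) * f S"
      if "w \<in> V" "Y \<subseteq> V - {w}" "card Y \<le> k - 1" for w Y
      using assms(2,3) that \<open>f {} \<le> f S\<close> S_max[OF that(1)]
      by (intro f_sup_le_star_bound[OF Fr \<open>2 \<le> r\<close> _ _ that(1) Tf[OF that(1)]]) auto
  qed
  ultimately show ?thesis by blast
qed

theorem corollary1:
  fixes r :: nat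
  shows "\<exists>C::real. C > 0 \<and>
    (\<forall>(V::nat set) (f::nat set \<Rightarrow> real) m Vs fs k.
       in_Fr_with r V f m Vs fs \<longrightarrow> r < k \<longrightarrow> k \<le> card V - 1 \<longrightarrow>
       connected_set m Vs V \<longrightarrow>
       (\<forall>S \<in> star_exploration_outputs r V f m Vs fs k.
          S \<subseteq> V \<and> connected_set m Vs S \<and> card S \<le> k \<and>
          (\<forall>T. T \<subseteq> V \<longrightarrow> card T \<le> k \<longrightarrow> f T \<le> C * real k ^ (r - 1) * f S)))"
  using star_exploration_output_approx by (intro exI[of _ "4 * real r + 2"] conjI) (simp, blast)

end
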